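(* Let $(\mathscr T_t)_{t\ge0}$ be a Crump-Mode-Jagers process with generic waiting-time sequence $(X_j)_{j\in\mathbb N}$ of $[0,\infty]$-valued random variables as in the context, assume the $X_j$ are mutually independent, and assume that for some $\alpha>0$, \[\sum_{j=1}^\infty\mathbb E\Big[e^{-\alpha\sum_{i=1}^jX_i}\Big]<1.\] Then almost surely $|\mathscr T_t|<\infty$ for every $t>0$.
   Context: Ulam–Harris tree: $\mathcal U=\bigcup_{n\ge0}\mathbb N^n$ with $\mathbb N^0=\{\varnothing\}$; $u=u_1\cdots u_k$, $uj$ is the $j$-th child of $u$. Let $(X_j)_{j\in\mathbb N}$ be $[0,\infty]$-valued random variables (the value $\infty$ is allowed) and for each $u\in\mathcal U$ let $(X(uj))_{j\in\mathbb N}$ be a copy of $(X_j)_j$, independent over different $u$. Birth times: $\mathcal B(\varnothing)=0$, $\mathcal B(ui)=\mathcal B(u)+\sum_{j=1}^iX(uj)$; $\mathscr T_t=\{x\in\mathcal U:\mathcal B(x)\le t\}$. *)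

theory Defs
  imports "HOL-Probability.Probability"
begin

text \<open>Ulam-Harris nodes are lists of natural numbers; child indices are 0-based,
  so child index i corresponds to the (i+1)-th child of the paper.
  X p j is the waiting time X(p(j+1)) of the paper.\<close>

primrec birth_from :: "(nat list \<Rightarrow> nat \<Rightarrow> 'a \<Rightarrow> ennreal) \<Rightarrow> nat list \<Rightarrow> nat list \<Rightarrow> 'a \<Rightarrow> ennreal" where
  "birth_from X p [] \<omega> = 0"
| "birth_from X p (i # r) \<omega> = (\<Sum>j\<le>i. X p j \<omega>) + birth_from X (p @ [i]) r \<omega>"

definition birth :: "(nat list \<Rightarrow> nat \<Rightarrow> 'a \<Rightarrow> ennreal) \<Rightarrow> nat list \<Rightarrow> 'a \<Rightarrow> ennreal" where
  "birth X u \<omega> = birth_from X [] u \<omega>"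

definition born_by :: "(nat list \<Rightarrow> nat \<Rightarrow> 'a \<Rightarrow> ennreal) \<Rightarrow> real \<Rightarrow> 'a \<Rightarrow> nat list set" where
  "born_by X t \<omega> = {u. birth X u \<omega> \<le> ennreal t}"

definition exp_neg :: "real \<Rightarrow> ennreal \<Rightarrow> real" where
  "exp_neg a x = (if x = \<infinity> then 0 else exp (- a * enn2real x))"

end

theory Submission
  imports Defs
begin

text \<open>Weight each individual u by e^{-\<alpha> B(u)}. The waiting times of u are independent of those
  of its ancestors, which alone determine B(u); hence E e^{-\<alpha> B(u i)} = E e^{-\<alpha> B(u)} m_i with
  m_i = E e^{-\<alpha>(X_1 + ... + X_i)}. The individuals of generation n therefore carry total expected
  weight (\<Sum>_i m_i)^n, and the total weight of the whole tree has expectation at most the geometric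
  series \<Sum>_n (\<Sum>_i m_i)^n < \<infinity>. So the total weight is almost surely finite, whereas every
  individual of T_t has weight at least e^{-\<alpha> t}.\<close>

lemma birth_from_cong:
  "(\<And>k j. k < length r \<Longrightarrow> X (p @ take k r) j \<omega> = X' (p @ take k r) j \<omega>') \<Longrightarrow>
   birth_from X p r \<omega> = birth_from X' p r \<omega>'"
proof (induction r arbitrary: p)
  case Nil
  then show ?case by simp
next
  case (Cons i r)
  have "X p j \<omega> = X' p j \<omega>'" for j
    using Cons.prems[of 0 j] by simp
  moreover have "birth_from X (p @ [i]) r \<omega> = birth_from X' (p @ [i]) r \<omega>'"
    by (rule Cons.IH) (use Cons.prems in \<open>fastforce dest: Cons.prems[of "Suc _"]\<close>)
  ultimately show ?case by simp
qed

lemma birth_from_snoc: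
  "birth_from X p (r @ [i]) \<omega> = birth_from X p r \<omega> + (\<Sum>j\<le>i. X (p @ r) j \<omega>)"
  by (induction r arbitrary: p) (simp_all add: add.assoc)

lemma birth_from_measurable:
  assumes "\<And>k j. k < length r \<Longrightarrow> X (p @ take k r) j \<in> borel_measurable M"
  shows "birth_from X p r \<in> borel_measurable M"
  using assms
proof (induction r arbitrary: p)
  case Nil
  then show ?case by simp
next
  case (Cons i r)
  have [measurable]: "X p j \<in> borel_measurable M" for j
    using Cons.prems[of 0 j] by simp
  have [measurable]: "birth_from X (p @ [i]) r \<in> borel_measurable M"
    by (rule Cons.IH) (use Cons.prems in \<open>fastforce dest: Cons.prems[of "Suc _"]\<close>)
  have "birth_from X p (i # r) = (\<lambda>\<omega>. (\<Sum>j\<le>i. X p j \<omega>) + birth_from X (p @ [i]) r \<omega>)"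
    by auto
  also have "\<dots> \<in> borel_measurable M"
    by measurable
  finally show ?case .
qed

lemma birth_measurable:
  assumes "\<And>v j. X v j \<in> borel_measurable M"
  shows "birth X u \<in> borel_measurable M"
proof -
  have "birth X u = birth_from X [] u"
    by (simp add: fun_eq_iff birth_def)
  then show ?thesis
    by (simp add: birth_from_measurable assms)
qed

lemma exp_neg_add: "exp_neg a (x + y) = exp_neg a x * exp_neg a y"
proof (cases "x = \<infinity> \<or> y = \<infinity>")
  case True
  then show ?thesis by (auto simp: exp_neg_def)
next
  case False
  then have "x < top" "y < top" by (auto simp: less_top)
  with False show ?thesis
    by (simp add: exp_neg_def enn2real_plus exp_add[symmetric] algebra_simps)
qed

lemma exp_neg_nonneg [simp]: "0 \<le> exp_neg a x"
  by (simp add: exp_neg_def)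

lemma exp_neg_measurable [measurable]:
  assumes [measurable]: "f \<in> borel_measurable M"
  shows "(\<lambda>x. exp_neg a (f x)) \<in> borel_measurable M"
  unfolding exp_neg_def by measurable

lemma exp_neg_ge_exp:
  assumes "x \<le> ennreal t" "0 \<le> a" "0 \<le> t"
  shows "exp (- a * t) \<le> exp_neg a x"
proof -
  have "x \<noteq> \<infinity>"
    using assms(1) by (auto simp: top_unique)
  moreover have "enn2real x \<le> t"
    using enn2real_mono[OF assms(1)] assms(3) by simp
  ultimately show ?thesis
    using assms(2) by (simp add: exp_neg_def mult_left_mono)
qed

lemma ennreal_suminf_power_less_top:
  fixes r :: ennreal
  assumes "r < 1"
  shows "(\<Sum>n. r ^ n) < \<infinity>"
proof -
  obtain q where q: "r = ennreal q" "0 \<le> q" "q < 1"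
    using assms by (cases r) (auto simp: ennreal_less_one_iff)
  have "(\<Sum>n. r ^ n) = (\<Sum>n. ennreal (q ^ n))"
    using q by (simp add: ennreal_power)
  also have "\<dots> = ennreal (\<Sum>n. q ^ n)"
    by (rule suminf_ennreal2) (use q in \<open>auto intro: summable_geometric\<close>)
  finally show ?thesis by simp
qed

lemma (in prob_space) indep_var_nn_integral:
  fixes X Y :: "'a \<Rightarrow> ennreal"
  assumes "indep_var borel X borel Y"
  shows "(\<integral>\<^sup>+\<omega>. X \<omega> * Y \<omega> \<partial>M) = (\<integral>\<^sup>+\<omega>. X \<omega> \<partial>M) * (\<integral>\<^sup>+\<omega>. Y \<omega> \<partial>M)"
proof -
  have "case_bool borel borel = (\<lambda>_. borel :: ennreal measure)"
    by (simp add: fun_eq_iff split: bool.split)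
  with assms have "indep_vars (\<lambda>_. borel) (case_bool X Y) UNIV"
    by (simp add: indep_var_def)
  then show ?thesis
    using indep_vars_nn_integral[of UNIV "case_bool X Y"] by (simp add: UNIV_bool mult.commute)
qed

lemma nn_integral_eq_if_distr_eq:
  assumes "f \<in> measurable M N" "g \<in> measurable M N" "distr M N f = distr M N g"
    and "h \<in> borel_measurable N"
  shows "(\<integral>\<^sup>+\<omega>. h (f \<omega>) \<partial>M) = (\<integral>\<^sup>+\<omega>. h (g \<omega>) \<partial>M)"
  using assms by (simp add: nn_integral_distr[symmetric])

lemma (in prob_space) indep_birth_own_waiting_times:
  fixes X :: "nat list \<Rightarrow> nat \<Rightarrow> 'a \<Rightarrow> ennreal"
    and h :: "(nat \<Rightarrow> ennreal) \<Rightarrow> ennreal"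
  assumes indep: "indep_vars (\<lambda>_. PiM UNIV (\<lambda>_. borel)) (\<lambda>u \<omega> j. X u j \<omega>) UNIV"
    and h_meas: "h \<in> borel_measurable (PiM UNIV (\<lambda>_. borel))"
  shows "indep_var borel (birth X u) borel (\<lambda>\<omega>. h (\<lambda>j. X u j \<omega>))"
proof -
  define E where "E = PiM (UNIV :: nat set) (\<lambda>_. borel :: ennreal measure)"
  \<comment> \<open>B(u) only reads the waiting times of the strict prefixes of u.\<close>
  define ancestors where "ancestors = {take k u | k. k < length u}"
  define Y where "Y A \<omega> = restrict (\<lambda>v j. X v j \<omega>) A" for A \<omega>
  have "length v < length u" if "v \<in> ancestors" for v
    using that by (auto simp: ancestors_def)
  then have "u \<notin> ancestors"
    by blast
  then have "indep_var (PiM ancestors (\<lambda>_. E)) (Y ancestors) (PiM {u} (\<lambda>_. E)) (Y {u})"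
    unfolding Y_def E_def by (intro indep_var_restrict[OF indep]) auto
  moreover have "(\<lambda>y. y v j) \<in> borel_measurable (PiM ancestors (\<lambda>_. E))" if "v \<in> ancestors" for v j
    using measurable_compose[OF measurable_component_singleton[OF that]
        measurable_component_singleton[of j UNIV]]
    by (simp add: E_def)
  then have "birth_from (\<lambda>v j y. y v j) [] u \<in> borel_measurable (PiM ancestors (\<lambda>_. E))"
    by (intro birth_from_measurable) (auto simp: ancestors_def)
  moreover have "(\<lambda>y. h (y u)) \<in> borel_measurable (PiM {u} (\<lambda>_. E))"
    using measurable_compose[OF measurable_component_singleton[of u "{u}"] h_meas] by (simp add: E_def)
  ultimately have "indep_var borel (birth_from (\<lambda>v j y. y v j) [] u \<circ> Y ancestors)
      borel ((\<lambda>y. h (y u)) \<circ> Y {u})"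
    by (rule indep_var_compose)
  moreover have "birth_from (\<lambda>v j y. y v j) [] u (Y ancestors \<omega>) = birth X u \<omega>" for \<omega>
    unfolding Y_def birth_def by (rule birth_from_cong) (auto simp: ancestors_def)
  then have "birth_from (\<lambda>v j y. y v j) [] u \<circ> Y ancestors = birth X u"
    by (simp add: fun_eq_iff)
  moreover have "(\<lambda>y. h (y u)) \<circ> Y {u} = (\<lambda>\<omega>. h (\<lambda>j. X u j \<omega>))"
    by (simp add: fun_eq_iff Y_def)
  ultimately show ?thesis
    by simp
qed

lemma (in prob_space) nn_integral_exp_neg_birth_snoc:
  fixes Xg :: "nat \<Rightarrow> 'a \<Rightarrow> ennreal" and X :: "nat list \<Rightarrow> nat \<Rightarrow> 'a \<Rightarrow> ennreal"
  assumes X_meas: "\<And>u j. X u j \<in> borel_measurable M"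
    and Xg_meas: "\<And>j. Xg j \<in> borel_measurable M"
    and same_distr: "\<And>u. distr M (PiM UNIV (\<lambda>_. borel)) (\<lambda>\<omega> j. X u j \<omega>)
                        = distr M (PiM UNIV (\<lambda>_. borel)) (\<lambda>\<omega> j. Xg j \<omega>)"
    and indep: "indep_vars (\<lambda>_. PiM UNIV (\<lambda>_. borel)) (\<lambda>u \<omega> j. X u j \<omega>) UNIV"
  shows "(\<integral>\<^sup>+\<omega>. ennreal (exp_neg a (birth X (u @ [i]) \<omega>)) \<partial>M) =
         (\<integral>\<^sup>+\<omega>. ennreal (exp_neg a (birth X u \<omega>)) \<partial>M) *
         (\<integral>\<^sup>+\<omega>. ennreal (exp_neg a (\<Sum>j\<le>i. Xg j \<omega>)) \<partial>M)"
proof -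
  define h where "h y = ennreal (exp_neg a (\<Sum>j\<le>i. y j))" for y :: "nat \<Rightarrow> ennreal"
  have h_meas: "h \<in> borel_measurable (PiM UNIV (\<lambda>_. borel))"
    unfolding h_def by measurable
  have "indep_var borel (\<lambda>\<omega>. ennreal (exp_neg a (birth X u \<omega>))) borel (\<lambda>\<omega>. h (\<lambda>j. X u j \<omega>))"
    using indep_var_compose[unfolded comp_def, OF indep_birth_own_waiting_times[OF indep h_meas]]
    by measurable
  moreover have "exp_neg a (birth X (u @ [i]) \<omega>) = exp_neg a (birth X u \<omega>) * exp_neg a (\<Sum>j\<le>i. X u j \<omega>)"
    for \<omega>
    by (simp add: birth_def birth_from_snoc exp_neg_add)
  moreover have "(\<integral>\<^sup>+\<omega>. h (\<lambda>j. X u j \<omega>) \<partial>M) = (\<integral>\<^sup>+\<omega>. h (\<lambda>j. Xg j \<omega>) \<partial>M)"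
    by (rule nn_integral_eq_if_distr_eq[OF _ _ same_distr h_meas])
      (use X_meas Xg_meas in \<open>auto intro: measurable_PiM_single'\<close>)
  ultimately show ?thesis
    by (simp add: indep_var_nn_integral ennreal_mult h_def)
qed

definition bounded_nodes :: "nat \<Rightarrow> nat \<Rightarrow> nat list set" where
  "bounded_nodes n K = {u. length u = n \<and> set u \<subseteq> {..<K}}"

definition node_box :: "nat \<Rightarrow> nat list set" where
  "node_box N = (\<Union>n<N. bounded_nodes n N)"

lemma finite_bounded_nodes: "finite (bounded_nodes n K)"
  using finite_lists_length_eq[of "{..<K}" n] by (simp add: bounded_nodes_def conj_commute)

lemma bounded_nodes_0: "bounded_nodes 0 K = {[]}"
  by (auto simp: bounded_nodes_def)

lemma bounded_nodes_Suc:
  "bounded_nodes (Suc n) K = (\<lambda>(u, i). u @ [i]) ` (bounded_nodes n K \<times> {..<K})"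
proof
  show "bounded_nodes (Suc n) K \<subseteq> (\<lambda>(u, i). u @ [i]) ` (bounded_nodes n K \<times> {..<K})"
  proof
    fix w
    assume w: "w \<in> bounded_nodes (Suc n) K"
    then obtain u i where "w = u @ [i]"
      by (auto simp: bounded_nodes_def length_Suc_conv_rev)
    with w show "w \<in> (\<lambda>(u, i). u @ [i]) ` (bounded_nodes n K \<times> {..<K})"
      by (auto simp: bounded_nodes_def image_iff)
  qed
qed (auto simp: bounded_nodes_def)

lemma sum_bounded_nodes_le_power:
  fixes a :: "nat list \<Rightarrow> ennreal" and m :: "nat \<Rightarrow> ennreal"
  assumes "a [] = 1" and "\<And>u i. a (u @ [i]) = a u * m i"
  shows "(\<Sum>u\<in>bounded_nodes n K. a u) \<le> (\<Sum>i. m i) ^ n"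
proof (induction n)
  case 0
  then show ?case by (simp add: bounded_nodes_0 assms(1))
next
  case (Suc n)
  have inj: "inj_on (\<lambda>(u, i). u @ [i]) (bounded_nodes n K \<times> {..<K})"
    by (auto simp: inj_on_def)
  then have "(\<Sum>u\<in>bounded_nodes (Suc n) K. a u) = (\<Sum>(u, i)\<in>bounded_nodes n K \<times> {..<K}. a (u @ [i]))"
    unfolding bounded_nodes_Suc sum.reindex[OF inj] by (simp add: comp_def case_prod_unfold)
  also have "\<dots> = (\<Sum>u\<in>bounded_nodes n K. \<Sum>i<K. a (u @ [i]))"
    by (rule sum.cartesian_product[symmetric])
  also have "\<dots> = (\<Sum>u\<in>bounded_nodes n K. \<Sum>i<K. a u * m i)"
    by (simp add: assms(2))
  also have "\<dots> = (\<Sum>u\<in>bounded_nodes n K. a u) * (\<Sum>i<K. m i)"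
    by (simp only: sum_distrib_left[symmetric] sum_distrib_right)
  also have "\<dots> \<le> (\<Sum>i. m i) ^ n * (\<Sum>i. m i)"
    by (intro mult_mono Suc.IH sum_le_suminf) (auto intro: summableI)
  finally show ?case
    by (simp add: mult.commute)
qed

lemma sum_node_box_le_suminf_power:
  fixes a :: "nat list \<Rightarrow> ennreal" and m :: "nat \<Rightarrow> ennreal"
  assumes "a [] = 1" and "\<And>u i. a (u @ [i]) = a u * m i"
  shows "(\<Sum>u\<in>node_box N. a u) \<le> (\<Sum>n. (\<Sum>i. m i) ^ n)"
proof -
  have "(\<Sum>u\<in>node_box N. a u) = (\<Sum>n<N. \<Sum>u\<in>bounded_nodes n N. a u)"
    unfolding node_box_def
    by (rule sum.UNION_disjoint) (auto simp: finite_bounded_nodes, auto simp: bounded_nodes_def)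
  also have "\<dots> \<le> (\<Sum>n<N. (\<Sum>i. m i) ^ n)"
    by (intro sum_mono sum_bounded_nodes_le_power[OF assms])
  also have "\<dots> \<le> (\<Sum>n. (\<Sum>i. m i) ^ n)"
    by (intro sum_le_suminf) (auto intro: summableI)
  finally show ?thesis .
qed

lemma finite_node_box: "finite (node_box N)"
  by (simp add: node_box_def finite_bounded_nodes)

lemma incseq_node_box: "incseq node_box"
  by (rule monoI) (force simp: node_box_def bounded_nodes_def)

lemma finite_subset_node_box:
  assumes "finite A"
  shows "\<exists>N. A \<subseteq> node_box N"
proof
  define N where "N = (\<Sum>u\<in>A. Suc (length u + sum_list u))"
  show "A \<subseteq> node_box N"
  proof
    fix u
    assume "u \<in> A"
    then have "Suc (length u + sum_list u) \<le> N"
      unfolding N_def using assms by (intro member_le_sum) auto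
    moreover have "x \<le> sum_list u" if "x \<in> set u" for x
      using that by (auto intro: member_le_sum_list)
    ultimately show "u \<in> node_box N"
      by (fastforce simp: node_box_def bounded_nodes_def)
  qed
qed

lemma finite_superlevel_set_if_sums_bounded:
  fixes w :: "'i \<Rightarrow> ennreal"
  assumes sum_le: "\<And>A. finite A \<Longrightarrow> sum w A \<le> B" and "B \<noteq> \<infinity>" and "0 < c"
  shows "finite {u. ennreal c \<le> w u}"
proof -
  have "card A \<le> nat \<lceil>enn2real B / c\<rceil>" if "A \<subseteq> {u. ennreal c \<le> w u}" "finite A" for A
  proof -
    have "ennreal (real (card A) * c) = (\<Sum>u\<in>A. ennreal c)"
      using \<open>0 < c\<close> by (simp add: ennreal_mult ennreal_of_nat_eq_real_of_nat)
    also have "\<dots> \<le> sum w A"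
      using that(1) by (intro sum_mono) auto
    also have "\<dots> \<le> ennreal (enn2real B)"
      using sum_le[OF that(2)] \<open>B \<noteq> \<infinity>\<close> by (simp add: less_top)
    finally have "real (card A) * c \<le> enn2real B"
      by (simp add: ennreal_le_iff)
    then have "real (card A) \<le> enn2real B / c"
      using \<open>0 < c\<close> by (simp add: field_simps)
    then show ?thesis
      by linarith
  qed
  then show ?thesis
    using finite_if_finite_subsets_card_bdd by blast
qed

lemma AE_finite_superlevel_sets:
  fixes w :: "'i \<Rightarrow> 'a \<Rightarrow> ennreal" and F :: "nat \<Rightarrow> 'i set"
  assumes "incseq F" "\<And>N. finite (F N)" "\<And>A. finite A \<Longrightarrow> \<exists>N. A \<subseteq> F N"
    and w_meas: "\<And>u. w u \<in> borel_measurable M"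
    and "\<And>N. (\<integral>\<^sup>+\<omega>. (\<Sum>u\<in>F N. w u \<omega>) \<partial>M) \<le> C" and "C < \<infinity>"
  shows "AE \<omega> in M. \<forall>c>0. finite {u. ennreal c \<le> w u \<omega>}"
proof -
  define G where "G \<omega> = (SUP N. \<Sum>u\<in>F N. w u \<omega>)" for \<omega>
  have G_meas: "G \<in> borel_measurable M"
    unfolding G_def using w_meas by measurable
  have "incseq (\<lambda>N \<omega>. \<Sum>u\<in>F N. w u \<omega>)"
    using assms(1,2) by (auto simp: incseq_def le_fun_def intro!: sum_mono2)
  then have "(\<integral>\<^sup>+\<omega>. G \<omega> \<partial>M) = (SUP N. \<integral>\<^sup>+\<omega>. (\<Sum>u\<in>F N. w u \<omega>) \<partial>M)"
    unfolding G_def by (rule nn_integral_monotone_convergence_SUP) (use w_meas in measurable)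
  also have "\<dots> \<le> C"
    by (intro SUP_least assms(5))
  finally have G_finite: "AE \<omega> in M. G \<omega> \<noteq> \<infinity>"
    using \<open>C < \<infinity>\<close> by (intro nn_integral_PInf_AE G_meas) (auto simp: top_unique)
  have sum_le_G: "sum (\<lambda>u. w u \<omega>) A \<le> G \<omega>" if fin: "finite A" for A \<omega>
  proof -
    obtain N where "A \<subseteq> F N"
      using assms(3)[OF fin] by blast
    then have "sum (\<lambda>u. w u \<omega>) A \<le> (\<Sum>u\<in>F N. w u \<omega>)"
      using assms(2) by (intro sum_mono2) auto
    also have "\<dots> \<le> G \<omega>"
      unfolding G_def by (rule SUP_upper) simp
    finally show ?thesis .
  qed
  from G_finite show ?thesis
    by eventually_elim (auto intro: finite_superlevel_set_if_sums_bounded[OF sum_le_G])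
qed

lemma (in prob_space) nn_integral_node_box_weight_le:
  fixes Xg :: "nat \<Rightarrow> 'a \<Rightarrow> ennreal" and X :: "nat list \<Rightarrow> nat \<Rightarrow> 'a \<Rightarrow> ennreal"
  assumes X_meas: "\<And>u j. X u j \<in> borel_measurable M"
    and Xg_meas: "\<And>j. Xg j \<in> borel_measurable M"
    and same_distr: "\<And>u. distr M (PiM UNIV (\<lambda>_. borel)) (\<lambda>\<omega> j. X u j \<omega>)
                        = distr M (PiM UNIV (\<lambda>_. borel)) (\<lambda>\<omega> j. Xg j \<omega>)"
    and indep: "indep_vars (\<lambda>_. PiM UNIV (\<lambda>_. borel)) (\<lambda>u \<omega> j. X u j \<omega>) UNIV"
  shows "(\<integral>\<^sup>+\<omega>. (\<Sum>u\<in>node_box N. ennreal (exp_neg a (birth X u \<omega>))) \<partial>M)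
         \<le> (\<Sum>n. (\<Sum>i. \<integral>\<^sup>+\<omega>. ennreal (exp_neg a (\<Sum>j\<le>i. Xg j \<omega>)) \<partial>M) ^ n)"
proof -
  have "(\<integral>\<^sup>+\<omega>. (\<Sum>u\<in>node_box N. ennreal (exp_neg a (birth X u \<omega>))) \<partial>M)
      = (\<Sum>u\<in>node_box N. \<integral>\<^sup>+\<omega>. ennreal (exp_neg a (birth X u \<omega>)) \<partial>M)"
    using birth_measurable[OF X_meas] by (intro nn_integral_sum finite_node_box) measurable
  also have "\<dots> \<le> (\<Sum>n. (\<Sum>i. \<integral>\<^sup>+\<omega>. ennreal (exp_neg a (\<Sum>j\<le>i. Xg j \<omega>)) \<partial>M) ^ n)"
    by (rule sum_node_box_le_suminf_power)
      (simp add: birth_def exp_neg_def emeasure_space_1,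
       rule nn_integral_exp_neg_birth_snoc[OF X_meas Xg_meas same_distr indep])
  finally show ?thesis .
qed

theorem lemma3p5:
  fixes M :: "'a measure"
    and Xg :: "nat \<Rightarrow> 'a \<Rightarrow> ennreal"
    and X :: "nat list \<Rightarrow> nat \<Rightarrow> 'a \<Rightarrow> ennreal"
    and \<alpha> :: real
  assumes "prob_space M"
    and "\<And>j. Xg j \<in> borel_measurable M"
    and "\<And>u j. X u j \<in> borel_measurable M"
    and "prob_space.indep_vars M (\<lambda>_. borel) Xg UNIV"
    and "\<And>u. distr M (PiM UNIV (\<lambda>_. borel)) (\<lambda>\<omega> j. X u j \<omega>)
              = distr M (PiM UNIV (\<lambda>_. borel)) (\<lambda>\<omega> j. Xg j \<omega>)"
    and "prob_space.indep_vars M (\<lambda>_. PiM UNIV (\<lambda>_. borel)) (\<lambda>u \<omega> j. X u j \<omega>) UNIV"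
    and "\<alpha> > 0"
    and "(\<Sum>j. \<integral>\<^sup>+ \<omega>. ennreal (exp_neg \<alpha> (\<Sum>i\<le>j. Xg i \<omega>)) \<partial>M) < 1"
  shows "AE \<omega> in M. \<forall>t>0. finite (born_by X t \<omega>)"
proof -
  interpret prob_space M
    by (rule assms(1))
  have finite_superlevel: "AE \<omega> in M. \<forall>c>0. finite {u. ennreal c \<le> ennreal (exp_neg \<alpha> (birth X u \<omega>))}"
  proof (rule AE_finite_superlevel_sets[OF incseq_node_box finite_node_box finite_subset_node_box])
    show "(\<lambda>\<omega>. ennreal (exp_neg \<alpha> (birth X u \<omega>))) \<in> borel_measurable M" for u
      using birth_measurable[OF assms(3)] by measurable
    show "(\<integral>\<^sup>+\<omega>. (\<Sum>u\<in>node_box N. ennreal (exp_neg \<alpha> (birth X u \<omega>))) \<partial>M)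
        \<le> (\<Sum>n. (\<Sum>i. \<integral>\<^sup>+\<omega>. ennreal (exp_neg \<alpha> (\<Sum>j\<le>i. Xg j \<omega>)) \<partial>M) ^ n)" for N
      by (rule nn_integral_node_box_weight_le[OF assms(3,2,5,6)])
    show "(\<Sum>n. (\<Sum>i. \<integral>\<^sup>+\<omega>. ennreal (exp_neg \<alpha> (\<Sum>j\<le>i. Xg j \<omega>)) \<partial>M) ^ n) < \<infinity>"
      using assms(8) by (rule ennreal_suminf_power_less_top)
  qed
  have born_by_subset: "born_by X t \<omega> \<subseteq> {u. ennreal (exp (- \<alpha> * t)) \<le> ennreal (exp_neg \<alpha> (birth X u \<omega>))}"
    if "0 < t" for t \<omega>
    using that assms(7) exp_neg_ge_exp[of _ t \<alpha>] by (auto simp: born_by_def)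
  from finite_superlevel show ?thesis
    by eventually_elim (auto intro: finite_subset[OF born_by_subset])
qed

end
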